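(* Let $K$ be uniformly distributed on $\{0,1\}^N$, let $\mathcal L$ be a finite set and $\Psi:\{0,1\}^N\to\mathcal L$. For $\lambda\in\mathcal L$ put $S_\lambda := \Psi^{-1}(\lambda)$, let $\mathbb P_\lambda(\cdot) := \mathbb P(\cdot\mid \Psi(K)=\lambda)$ (so $K$ is uniform on $S_\lambda$ under $\mathbb P_\lambda$), and write $\mathbb E_\lambda$ for expectation under $\mathbb P_\lambda$. For $1\le r\le d$ and probes $p_1,\dots,p_r\in\{1,\dots,N\}$ define \[ g_\lambda(p_1,\dots,p_r) := \sum_{x\in\{0,1\}^r}\mathbb P_\lambda\big((K[p_1],\dots,K[p_r]) = x\big)^2. \] Let $P_1,\dots,P_d$ be independent uniform elements of $\{1,\dots,N\}$, independent of $K$. Let $\alpha\ge 0$ with $\alpha+d\le N$. If $\log_2|S_\lambda| \ge N-\alpha$, then \[ \mathbb E_\lambda\big[g_\lambda(P_1,\dots,P_d)\big] \le \Big[h^{-1}\Big(1-\frac{\alpha+d}{N}\Big)\Big]^d. \]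
   Context: $K[i]$ is the $i$-th bit of $K$. $h(p)=p\log_2\frac1p+(1-p)\log_2\frac1{1-p}$ is the binary entropy function on $[0,1]$; $h^{-1}:[0,1]\to[1/2,1]$ is the inverse of the restriction of $h$ to $[1/2,1]$ (a strictly decreasing bijection onto $[0,1]$). *)

theory Defs
  imports "HOL-Analysis.Analysis"
begin

text \<open>Bit strings in {0,1}^N, indexed by 1..N (bit i of k is k i).\<close>
definition cube :: "nat \<Rightarrow> (nat \<Rightarrow> bool) set" where
  "cube N = PiE {1..N} (\<lambda>_. UNIV)"

definition fiber :: "nat \<Rightarrow> ((nat \<Rightarrow> bool) \<Rightarrow> 'l) \<Rightarrow> 'l \<Rightarrow> (nat \<Rightarrow> bool) set" where
  "fiber N Psi lam = {k \<in> cube N. Psi k = lam}"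

definition cond_prob ::
  "nat \<Rightarrow> ((nat \<Rightarrow> bool) \<Rightarrow> 'l) \<Rightarrow> 'l \<Rightarrow> nat \<Rightarrow> (nat \<Rightarrow> nat) \<Rightarrow> (nat \<Rightarrow> bool) \<Rightarrow> real" where
  "cond_prob N Psi lam r p x =
     real (card {k \<in> fiber N Psi lam. \<forall>j\<in>{1..r}. k (p j) = x j}) / real (card (fiber N Psi lam))"

definition g_fun :: "nat \<Rightarrow> ((nat \<Rightarrow> bool) \<Rightarrow> 'l) \<Rightarrow> 'l \<Rightarrow> nat \<Rightarrow> (nat \<Rightarrow> nat) \<Rightarrow> real" where
  "g_fun N Psi lam r p = (\<Sum>x\<in>PiE {1..r} (\<lambda>_. UNIV). (cond_prob N Psi lam r p x)^2)"

text \<open>E_lambda[g(P_1,...,P_d)], with P_1..P_d iid uniform on {1..N}, independent of K\<close>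
definition expected_g :: "nat \<Rightarrow> ((nat \<Rightarrow> bool) \<Rightarrow> 'l) \<Rightarrow> 'l \<Rightarrow> nat \<Rightarrow> real" where
  "expected_g N Psi lam d =
     (\<Sum>p\<in>PiE {1..d} (\<lambda>_. {1..N}). g_fun N Psi lam d p) / real N ^ d"

definition bin_entropy :: "real \<Rightarrow> real" where
  "bin_entropy p = p * log 2 (1/p) + (1 - p) * log 2 (1/(1 - p))"

definition bin_entropy_inv :: "real \<Rightarrow> real" where
  "bin_entropy_inv y = (THE p. p \<in> {1/2..1} \<and> bin_entropy p = y)"

end

theory Submission
  imports Defs "HOL-Real_Asymp.Real_Asymp"
begin

(* Write T for the fibre S_lambda and call two keys colliding for probes p_1, ..., p_r if they agree
   on all probed bits, so that g_lambda(p) is |T|^-2 times the number of colliding pairs. Appending a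
   uniformly random probe j keeps a colliding pair (k, k') iff k' also agrees with k at bit j; inside
   the class C of k this happens for at most |C| max(f_j, 1 - f_j) keys, where f_j is the frequency of
   ones at bit j in C. By subadditivity of entropy the h(f_j) sum to at least log |C|, and by Jensen for
   x log x and Cauchy-Schwarz (there are at least |T|^2 / 2^r colliding pairs) their class-weighted
   average is at least (log |T| - r) / N >= h(q) for q = h^-1(1 - (alpha + d) / N). Concavity of h and
   its monotonicity on [1/2, 1] then bound the weighted mean of max(f_j, 1 - f_j) by q, so every probe
   multiplies the expected number of colliding pairs by at most q, and E[g] <= q^d. *)

section \<open>Binary entropy\<close>

lemma bin_entropy_eq_ln:
  assumes "0 \<le> x" "x \<le> 1"
  shows "bin_entropy x = - (x * ln x + (1 - x) * ln (1 - x)) / ln 2"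
proof -
  have *: "y * log 2 (1 / y) = - (y * ln y) / ln 2" if "0 \<le> y" for y :: real
    using that by (cases "y = 0") (simp_all add: log_def ln_div)
  show ?thesis
    using *[of x] *[of "1 - x"] assms unfolding bin_entropy_def by (simp add: field_simps)
qed

lemma bin_entropy_one_minus: "bin_entropy (1 - x) = bin_entropy x"
  unfolding bin_entropy_def by simp

lemma bin_entropy_max_one_minus: "bin_entropy (max p (1 - p)) = bin_entropy p"
  by (simp add: max_def bin_entropy_one_minus)

lemma bin_entropy_nonneg:
  assumes "0 \<le> x" "x \<le> 1"
  shows "0 \<le> bin_entropy x"
proof -
  have *: "y * ln y \<le> 0" if "0 \<le> y" "y \<le> 1" for y :: real
    using that by (cases "y = 0") (auto simp: mult_nonneg_nonpos)
  have "0 \<le> - (x * ln x + (1 - x) * ln (1 - x))"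
    using *[of x] *[of "1 - x"] assms by simp
  then show ?thesis
    using assms by (simp add: bin_entropy_eq_ln)
qed

lemma has_real_derivative_bin_entropy:
  assumes "0 < x" "x < 1"
  shows "(bin_entropy has_real_derivative (ln (1 - x) - ln x) / ln 2) (at x)"
proof -
  have "((\<lambda>x. - (x * ln x + (1 - x) * ln (1 - x)) / ln 2) has_real_derivative
      (ln (1 - x) - ln x) / ln 2) (at x)"
    using assms by (auto intro!: derivative_eq_intros)
  then show ?thesis
    by (rule has_field_derivative_transform_within_open[where S = "{0<..<1}"])
      (use assms in \<open>auto simp: bin_entropy_eq_ln\<close>)
qed

lemma continuous_on_bin_entropy: "continuous_on {0..1} bin_entropy"
proof (rule continuous_on_IccI)
  show "(bin_entropy \<longlongrightarrow> bin_entropy 0) (at_right 0)"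
    unfolding bin_entropy_def[abs_def] by simp real_asymp
  show "(bin_entropy \<longlongrightarrow> bin_entropy 1) (at_left 1)"
    unfolding bin_entropy_def[abs_def] by simp real_asymp
  show "bin_entropy \<midarrow>x\<rightarrow> bin_entropy x" if "0 < x" "x < 1" for x
    using DERIV_isCont[OF has_real_derivative_bin_entropy] that by (simp add: isCont_def)
qed simp

lemma bin_entropy_strict_antimono:
  assumes "1/2 \<le> x" "x < y" "y \<le> 1"
  shows "bin_entropy y < bin_entropy x"
proof (rule DERIV_neg_imp_decreasing_open[OF \<open>x < y\<close>])
  fix z assume "x < z" "z < y"
  with assms have "0 < z" "z < 1" "ln (1 - z) < ln z" by auto
  then show "\<exists>D. (bin_entropy has_real_derivative D) (at z) \<and> D < 0"
    using has_real_derivative_bin_entropy[of z]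
    by (intro exI[of _ "(ln (1 - z) - ln z) / ln 2"]) (auto simp: divide_neg_pos)
next
  show "continuous_on {x..y} bin_entropy"
    using assms by (intro continuous_on_subset[OF continuous_on_bin_entropy]) auto
qed

lemma bin_entropy_inv_spec:
  assumes "0 \<le> y" "y \<le> 1"
  shows "bin_entropy_inv y \<in> {1/2..1}" "bin_entropy (bin_entropy_inv y) = y"
proof -
  have "\<exists>p. 1/2 \<le> p \<and> p \<le> 1 \<and> bin_entropy p = y"
    using assms continuous_on_bin_entropy
    by (intro IVT2') (auto simp: bin_entropy_def elim: continuous_on_subset)
  moreover have "p = p'" if "p \<in> {1/2..1}" "p' \<in> {1/2..1}" "bin_entropy p = bin_entropy p'" for p p'
    using that bin_entropy_strict_antimono[of p p'] bin_entropy_strict_antimono[of p' p]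
    by (cases p p' rule: linorder_cases) auto
  ultimately have "\<exists>!p. p \<in> {1/2..1} \<and> bin_entropy p = y"
    by auto
  from theI'[OF this] show "bin_entropy_inv y \<in> {1/2..1}" "bin_entropy (bin_entropy_inv y) = y"
    unfolding bin_entropy_inv_def by auto
qed

lemma bin_entropy_grouping:
  fixes a b :: real
  assumes "0 < a" "0 < b"
  shows "log 2 (a + b) = bin_entropy (a / (a + b)) + a / (a + b) * log 2 a + b / (a + b) * log 2 b"
proof -
  have "1 - a / (a + b) = b / (a + b)"
    using assms by (simp add: field_simps)
  then have "bin_entropy (a / (a + b))
      = a / (a + b) * (log 2 (a + b) - log 2 a) + b / (a + b) * (log 2 (a + b) - log 2 b)"
    using assms by (simp add: bin_entropy_def log_divide)
  also have "\<dots> = log 2 (a + b) - a / (a + b) * log 2 a - b / (a + b) * log 2 b"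
    using assms by (simp add: field_simps)
  finally show ?thesis by simp
qed

lemma convex_on_x_ln_x: "convex_on {0..} (\<lambda>x::real. x * ln x)"
proof (rule convex_on_linorderI)
  fix t x y :: real
  assume t: "0 < t" "t < 1" and xy: "x \<in> {0..}" "y \<in> {0..}" "x < y"
  have "convex_on {0<..} (\<lambda>x::real. x * ln x)"
    by (rule convex_on_realI[where f' = "\<lambda>x. ln x + 1"]) (auto intro!: derivative_eq_intros)
  moreover have "t * y * ln (t * y) \<le> t * (y * ln y)" if "0 < y"
    using that t by (simp add: ln_mult algebra_simps mult_nonneg_nonpos)
  ultimately show "((1 - t) *\<^sub>R x + t *\<^sub>R y) * ln ((1 - t) *\<^sub>R x + t *\<^sub>R y)
      \<le> (1 - t) * (x * ln x) + t * (y * ln y)"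
    using t xy convex_onD[of "{0<..}" "\<lambda>x::real. x * ln x" t x y] by (cases "x = 0") auto
qed simp

lemma concave_on_bin_entropy: "concave_on {0..1} bin_entropy"
proof (rule concave_on_linorderI)
  fix t x y :: real
  assume t: "0 < t" "t < 1" and xy: "x \<in> {0..1}" "y \<in> {0..1}" "x < y"
  define z where "z = (1 - t) * x + t * y"
  have z: "0 \<le> z" "z \<le> 1"
    using t xy convex_bound_le[of x 1 y "1 - t" t] by (auto simp: z_def)
  have "z * ln z \<le> (1 - t) * (x * ln x) + t * (y * ln y)"
    using convex_onD[OF convex_on_x_ln_x, of t x y] t xy by (simp add: z_def)
  moreover have "(1 - z) * ln (1 - z) \<le> (1 - t) * ((1 - x) * ln (1 - x)) + t * ((1 - y) * ln (1 - y))"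
    using convex_onD[OF convex_on_x_ln_x, of t "1 - x" "1 - y"] t xy
    by (simp add: z_def algebra_simps)
  ultimately have "(1 - t) * (x * ln x + (1 - x) * ln (1 - x)) + t * (y * ln y + (1 - y) * ln (1 - y))
      \<ge> z * ln z + (1 - z) * ln (1 - z)"
    by (simp add: algebra_simps)
  then have "(1 - t) * bin_entropy x + t * bin_entropy y \<le> bin_entropy z"
    using xy z
    by (simp add: bin_entropy_eq_ln flip: add_divide_distrib, intro divide_right_mono)
      (auto simp: algebra_simps)
  then show "(1 - t) * bin_entropy x + t * bin_entropy y \<le> bin_entropy ((1 - t) *\<^sub>R x + t *\<^sub>R y)"
    by (simp add: z_def)
qed simp

lemma sum_mult_log_ge:
  fixes n :: "'a \<Rightarrow> real"
  assumes "finite T" "T \<noteq> {}" "\<And>k. k \<in> T \<Longrightarrow> 0 \<le> n k"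
  shows "(\<Sum>k\<in>T. n k) * log 2 ((\<Sum>k\<in>T. n k) / real (card T)) \<le> (\<Sum>k\<in>T. n k * log 2 (n k))"
proof -
  define M where "M = real (card T)"
  have M: "M > 0"
    using assms by (simp add: M_def card_gt_0_iff)
  have "(\<Sum>k\<in>T. (1 / M) * n k) * ln (\<Sum>k\<in>T. (1 / M) * n k) \<le> (\<Sum>k\<in>T. (1 / M) * (n k * ln (n k)))"
    using convex_on_sum[OF assms(1,2) convex_on_x_ln_x, of "\<lambda>_. 1 / M" n] assms M
    by (simp add: M_def)
  then have "(\<Sum>k\<in>T. n k) * ln ((\<Sum>k\<in>T. n k) / M) / M \<le> (\<Sum>k\<in>T. n k * ln (n k)) / M"
    by (simp flip: sum_divide_distrib)
  then have "(\<Sum>k\<in>T. n k) * ln ((\<Sum>k\<in>T. n k) / M) \<le> (\<Sum>k\<in>T. n k * ln (n k))"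
    using M by (simp add: divide_le_cancel)
  then have "(\<Sum>k\<in>T. n k) * ln ((\<Sum>k\<in>T. n k) / M) / ln 2 \<le> (\<Sum>k\<in>T. n k * ln (n k)) / ln 2"
    by (simp add: divide_right_mono)
  then show ?thesis
    by (simp add: log_def M_def sum_divide_distrib)
qed

lemma weighted_mean_le_if_bin_entropy_le:
  assumes "finite S" "S \<noteq> {}" "\<And>i. i \<in> S \<Longrightarrow> 0 \<le> a i" "(\<Sum>i\<in>S. a i) = 1"
    and "\<And>i. i \<in> S \<Longrightarrow> t i \<in> {1/2..1}" "q \<in> {1/2..1}"
    and "bin_entropy q \<le> (\<Sum>i\<in>S. a i * bin_entropy (t i))"
  shows "(\<Sum>i\<in>S. a i * t i) \<le> q"
proof (rule ccontr)
  define m where "m = (\<Sum>i\<in>S. a i * t i)"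
  assume "\<not> m \<le> q"
  moreover have "m \<le> 1"
    using assms(3-5) sum_mono[of S "\<lambda>i. a i * t i" a] by (force simp: m_def mult_left_le)
  ultimately have "bin_entropy m < bin_entropy q"
    using assms(6) by (intro bin_entropy_strict_antimono) auto
  moreover have "(\<Sum>i\<in>S. a i * bin_entropy (t i)) \<le> bin_entropy m"
    using concave_on_sum[OF assms(1,2) concave_on_bin_entropy, of a t] assms(3-5)
    by (force simp: m_def)
  ultimately show False
    using assms(7) by simp
qed

lemma sum_max_le_if_sum_bin_entropy_ge:
  fixes w :: "'a \<Rightarrow> real" and p :: "'a \<Rightarrow> 'j \<Rightarrow> real"
  assumes "finite T" "finite J" "J \<noteq> {}" "\<And>k. k \<in> T \<Longrightarrow> 0 \<le> w k" "0 < (\<Sum>k\<in>T. w k)"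
    and "\<And>k j. p k j \<in> {0..1}" "q \<in> {1/2..1}"
    and "real (card J) * bin_entropy q * (\<Sum>k\<in>T. w k)
      \<le> (\<Sum>k\<in>T. w k * (\<Sum>j\<in>J. bin_entropy (p k j)))"
  shows "(\<Sum>k\<in>T. w k * (\<Sum>j\<in>J. max (p k j) (1 - p k j))) \<le> q * real (card J) * (\<Sum>k\<in>T. w k)"
proof -
  define W where "W = real (card J) * (\<Sum>k\<in>T. w k)"
  define a where "a kj = w (fst kj) / W" for kj :: "'a \<times> 'j"
  define t where "t kj = max (p (fst kj) (snd kj)) (1 - p (fst kj) (snd kj))" for kj :: "'a \<times> 'j"
  have W: "0 < W"
    using assms(2,3,5) by (simp add: W_def card_gt_0_iff)
  have sum_TJ: "(\<Sum>kj\<in>T \<times> J. g kj) = (\<Sum>k\<in>T. \<Sum>j\<in>J. g (k, j))" for g :: "_ \<Rightarrow> real"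
    by (simp add: sum.cartesian_product)
  have "(\<Sum>kj\<in>T \<times> J. a kj) = (\<Sum>k\<in>T. real (card J) * w k) / W"
    by (simp add: sum_TJ a_def sum_divide_distrib)
  also have "\<dots> = 1"
    using W by (simp add: W_def sum_distrib_left)
  finally have "(\<Sum>kj\<in>T \<times> J. a kj) = 1" .
  moreover have "bin_entropy q \<le> (\<Sum>kj\<in>T \<times> J. a kj * bin_entropy (t kj))"
  proof -
    have "(\<Sum>kj\<in>T \<times> J. a kj * bin_entropy (t kj))
        = (\<Sum>k\<in>T. w k * (\<Sum>j\<in>J. bin_entropy (p k j))) / W"
      by (simp add: sum_TJ a_def t_def bin_entropy_max_one_minus sum_distrib_left sum_divide_distrib)
    then show ?thesis
      using assms(8) W by (simp add: W_def pos_le_divide_eq mult_ac)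
  qed
  moreover have "T \<noteq> {}"
    using assms(5) by auto
  ultimately have "(\<Sum>kj\<in>T \<times> J. a kj * t kj) \<le> q"
    using assms(1-4,6,7) W
    by (intro weighted_mean_le_if_bin_entropy_le) (auto simp: a_def t_def max_def)
  moreover have "(\<Sum>kj\<in>T \<times> J. a kj * t kj)
      = (\<Sum>k\<in>T. w k * (\<Sum>j\<in>J. max (p k j) (1 - p k j))) / W"
    by (simp add: sum_TJ a_def t_def sum_distrib_left sum_divide_distrib)
  ultimately show ?thesis
    using W by (simp add: W_def pos_divide_le_eq mult_ac)
qed

section \<open>Bit frequencies and subadditivity of entropy\<close>

definition bit_freq :: "'i \<Rightarrow> ('i \<Rightarrow> bool) set \<Rightarrow> real" where
  "bit_freq j U = real (card {k \<in> U. k j}) / real (card U)"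

lemma bit_freq_bounds:
  assumes "finite U"
  shows "0 \<le> bit_freq j U" "bit_freq j U \<le> 1"
proof -
  have "card {k \<in> U. k j} \<le> card U"
    using assms by (auto intro: card_mono)
  then show "0 \<le> bit_freq j U" "bit_freq j U \<le> 1"
    by (auto simp: bit_freq_def divide_le_eq_1)
qed

lemma card_mult_bit_freq:
  assumes "finite U"
  shows "real (card U) * bit_freq j U = real (card {k \<in> U. k j})"
  using assms by (cases "U = {}") (simp_all add: bit_freq_def)

lemma card_agree_le_max_bit_freq:
  assumes "finite C"
  shows "real (card {k \<in> C. k j = b}) \<le> real (card C) * max (bit_freq j C) (1 - bit_freq j C)"
proof -
  have "card {k \<in> C. \<not> k j} = card (C - {k \<in> C. k j})"
    by (rule arg_cong[where f = card]) auto
  also have "\<dots> = card C - card {k \<in> C. k j}"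
    using assms by (intro card_Diff_subset) auto
  finally have "real (card {k \<in> C. \<not> k j}) = real (card C) * (1 - bit_freq j C)"
    using assms card_mult_bit_freq[OF assms, of j] card_mono[OF assms, of "{k \<in> C. k j}"]
    by (simp add: of_nat_diff algebra_simps)
  moreover have "real (card {k \<in> C. k j}) = real (card C) * bit_freq j C"
    using card_mult_bit_freq[OF assms] by simp
  ultimately show ?thesis
    by (cases b) (simp_all add: mult_left_mono)
qed

lemma bin_entropy_bit_freq_Un:
  assumes "finite A" "finite B" "A \<inter> B = {}" "A \<union> B \<noteq> {}"
  shows "real (card A) / real (card (A \<union> B)) * bin_entropy (bit_freq j A)
       + real (card B) / real (card (A \<union> B)) * bin_entropy (bit_freq j B)
     \<le> bin_entropy (bit_freq j (A \<union> B))"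
proof -
  define t where "t = real (card A) / real (card (A \<union> B))"
  have "card (A \<union> B) = card A + card B" "card (A \<union> B) > 0"
    using assms by (auto simp: card_Un_disjoint card_gt_0_iff)
  then have n: "real (card (A \<union> B)) = real (card A) + real (card B)" "real (card (A \<union> B)) > 0"
    by auto
  then have t: "0 \<le> t" "t \<le> 1" "1 - t = real (card B) / real (card (A \<union> B))"
    by (auto simp: t_def field_simps)
  have "card {k \<in> A \<union> B. k j} = card ({k \<in> A. k j} \<union> {k \<in> B. k j})"
    by (rule arg_cong[where f = card]) auto
  also have "\<dots> = card {k \<in> A. k j} + card {k \<in> B. k j}"
    using assms by (intro card_Un_disjoint) auto
  finally have "real (card (A \<union> B)) * bit_freq j (A \<union> B)
      = real (card A) * bit_freq j A + real (card B) * bit_freq j B"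
    using assms by (simp add: card_mult_bit_freq)
  then have "bit_freq j (A \<union> B)
      = (real (card A) * bit_freq j A + real (card B) * bit_freq j B) / real (card (A \<union> B))"
    using n(2) by (simp add: nonzero_eq_divide_eq mult.commute)
  also have "\<dots> = (1 - t) * bit_freq j B + t * bit_freq j A"
    unfolding t(3) by (simp add: t_def add_divide_distrib)
  finally have "bit_freq j (A \<union> B) = (1 - t) * bit_freq j B + t * bit_freq j A" .
  then show ?thesis
    using concave_onD[OF concave_on_bin_entropy t(1,2), of "bit_freq j B" "bit_freq j A"]
      bit_freq_bounds[OF assms(1)] bit_freq_bounds[OF assms(2)]
    by (simp add: t flip: t_def)
qed

lemma log_card_Un_le:
  assumes "finite A" "finite B" "A \<inter> B = {}" "A \<noteq> {}" "B \<noteq> {}"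
    and "log 2 (real (card A)) \<le> (\<Sum>j\<in>I. bin_entropy (bit_freq j A))"
    and "log 2 (real (card B)) \<le> (\<Sum>j\<in>I. bin_entropy (bit_freq j B))"
  shows "log 2 (real (card (A \<union> B)))
    \<le> bin_entropy (real (card A) / real (card (A \<union> B))) + (\<Sum>j\<in>I. bin_entropy (bit_freq j (A \<union> B)))"
proof -
  define t where "t = real (card A) / real (card (A \<union> B))"
  have pos: "0 < real (card A)" "0 < real (card B)"
    using assms(1,2,4,5) by (simp_all add: card_gt_0_iff)
  have card_Un: "real (card (A \<union> B)) = real (card A) + real (card B)"
    using assms(1-3) by (simp add: card_Un_disjoint)
  then have t: "0 \<le> t" "1 - t = real (card B) / real (card (A \<union> B))"
    using pos by (simp_all add: t_def field_simps)
  have "log 2 (real (card (A \<union> B)))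
      = bin_entropy t + t * log 2 (real (card A)) + (1 - t) * log 2 (real (card B))"
    using bin_entropy_grouping[OF pos] unfolding t(2) unfolding t_def card_Un by simp
  also have "\<dots> \<le> bin_entropy t + t * (\<Sum>j\<in>I. bin_entropy (bit_freq j A))
      + (1 - t) * (\<Sum>j\<in>I. bin_entropy (bit_freq j B))"
    using assms(6,7) t pos by (intro add_mono mult_left_mono order_refl) simp_all
  also have "\<dots> = bin_entropy t
      + (\<Sum>j\<in>I. t * bin_entropy (bit_freq j A) + (1 - t) * bin_entropy (bit_freq j B))"
    by (simp add: sum_distrib_left sum.distrib)
  also have "\<dots> \<le> bin_entropy t + (\<Sum>j\<in>I. bin_entropy (bit_freq j (A \<union> B)))"
    unfolding t(2) unfolding t_def
    using bin_entropy_bit_freq_Un[OF assms(1-3)] assms(4)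
    by (intro add_left_mono sum_mono) simp
  finally show ?thesis
    by (simp add: t_def)
qed

lemma log_card_le_sum_bin_entropy:
  assumes "finite I" "finite U" "U \<noteq> {}"
    and "\<And>k k'. k \<in> U \<Longrightarrow> k' \<in> U \<Longrightarrow> (\<forall>j\<in>I. k j = k' j) \<Longrightarrow> k = k'"
  shows "log 2 (real (card U)) \<le> (\<Sum>j\<in>I. bin_entropy (bit_freq j U))"
  using assms
proof (induction I arbitrary: U rule: finite_induct)
  case empty
  then obtain k where "U = {k}"
    by blast
  then show ?case by simp
next
  case (insert i I U)
  have IH: "log 2 (real (card V)) \<le> (\<Sum>j\<in>I. bin_entropy (bit_freq j V))"
    if "V \<subseteq> U" "V \<noteq> {}" "\<And>k. k \<in> V \<Longrightarrow> k i = b" for V b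
  proof (rule insert.IH)
    show "finite V"
      using finite_subset[OF that(1) insert.prems(1)] .
    show "k = k'" if "k \<in> V" "k' \<in> V" "\<forall>j\<in>I. k j = k' j" for k k'
      using that \<open>V \<subseteq> U\<close> \<open>\<And>k. k \<in> V \<Longrightarrow> k i = b\<close> by (intro insert.prems(3)) auto
  qed (use that in auto)
  define U1 where "U1 = {k \<in> U. k i}"
  define U0 where "U0 = {k \<in> U. \<not> k i}"
  have U: "U = U1 \<union> U0" "U1 \<inter> U0 = {}" "finite U1" "finite U0"
    using insert.prems(1) by (auto simp: U1_def U0_def)
  have "log 2 (real (card U)) \<le> bin_entropy (bit_freq i U) + (\<Sum>j\<in>I. bin_entropy (bit_freq j U))"
  proof (cases "U1 = {} \<or> U0 = {}")
    case True
    then obtain b where "\<And>k. k \<in> U \<Longrightarrow> k i = b"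
      unfolding U1_def U0_def by blast
    then have "log 2 (real (card U)) \<le> (\<Sum>j\<in>I. bin_entropy (bit_freq j U))"
      using IH[of U b] insert.prems(2) by blast
    moreover have "0 \<le> bin_entropy (bit_freq i U)"
      using bit_freq_bounds[OF insert.prems(1)] by (rule bin_entropy_nonneg)
    ultimately show ?thesis
      by simp
  next
    case False
    have "bit_freq i U = real (card U1) / real (card U)"
      by (simp add: bit_freq_def U1_def)
    then show ?thesis
      using log_card_Un_le[OF U(3,4,2)] False IH[of U1 True] IH[of U0 False]
      unfolding U(1) by (simp add: U1_def U0_def)
  qed
  then show ?case
    using insert.hyps by simp
qed

lemma cube_eqI: "k \<in> cube N \<Longrightarrow> k' \<in> cube N \<Longrightarrow> (\<forall>j\<in>{1..N}. k j = k' j) \<Longrightarrow> k = k'"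
  unfolding cube_def by (auto intro: PiE_ext)

section \<open>Collisions\<close>

definition collision_class :: "'a set \<Rightarrow> ('a \<Rightarrow> 'b) \<Rightarrow> 'a \<Rightarrow> 'a set" where
  "collision_class T f k = {k' \<in> T. f k' = f k}"

definition collision_count :: "'a set \<Rightarrow> ('a \<Rightarrow> 'b) \<Rightarrow> real" where
  "collision_count T f = (\<Sum>k\<in>T. real (card (collision_class T f k)))"

lemma collision_count_eq_sum_squares:
  assumes "finite T" "finite X" "f ` T \<subseteq> X"
  shows "collision_count T f = (\<Sum>x\<in>X. real (card {k \<in> T. f k = x}) ^ 2)"
proof -
  have "collision_count T f
      = (\<Sum>x\<in>X. \<Sum>k\<in>{k \<in> T. f k = x}. real (card (collision_class T f k)))"
    unfolding collision_count_def using assms by (intro sum.group[symmetric])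
  also have "\<dots> = (\<Sum>x\<in>X. \<Sum>k\<in>{k \<in> T. f k = x}. real (card {k \<in> T. f k = x}))"
    by (intro sum.cong) (auto simp: collision_class_def)
  finally show ?thesis
    by (simp add: power2_eq_square)
qed

lemma card_squared_le_collision_count:
  assumes "finite T" "finite X" "f ` T \<subseteq> X"
  shows "real (card T) ^ 2 \<le> real (card X) * collision_count T f"
proof -
  have "real (card T) = (\<Sum>x\<in>X. real (card {k \<in> T. f k = x}))"
    using sum.group[OF assms, of "\<lambda>_. 1 :: real"] by simp
  then show ?thesis
    using sum_squared_le_sum_of_squares[of "\<lambda>x. real (card {k \<in> T. f k = x})" X]
    by (simp add: collision_count_eq_sum_squares[OF assms] mult.commute)
qed

lemma collision_count_mult_log_le:
  fixes T :: "(nat \<Rightarrow> bool) set"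
  assumes "finite T" "T \<noteq> {}" "T \<subseteq> cube N" "finite X" "f ` T \<subseteq> X"
  shows "collision_count T f * (log 2 (card T) - log 2 (card X))
    \<le> (\<Sum>k\<in>T. real (card (collision_class T f k))
          * (\<Sum>j\<in>{1..N}. bin_entropy (bit_freq j (collision_class T f k))))"
proof -
  define C where "C = collision_class T f"
  define n where "n k = real (card (C k))" for k
  define M where "M = real (card T)"
  have C: "k \<in> C k" "C k \<subseteq> T" if "k \<in> T" for k
    using that by (auto simp: C_def collision_class_def)
  have count: "collision_count T f = (\<Sum>k\<in>T. n k)"
    by (simp add: collision_count_def n_def C_def)
  have M: "M > 0" "real (card X) > 0"
    using assms by (auto simp: M_def card_gt_0_iff)
  have "M / real (card X) \<le> collision_count T f / M"
    using card_squared_le_collision_count[OF assms(1,4,5)] M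
    by (simp add: M_def divide_simps power2_eq_square mult.commute)
  then have "log 2 (M / real (card X)) \<le> log 2 ((\<Sum>k\<in>T. n k) / M)"
    using M by (intro log_mono) (simp_all add: count)
  then have "log 2 M - log 2 (card X) \<le> log 2 ((\<Sum>k\<in>T. n k) / M)"
    using M by (simp add: log_divide)
  then have "collision_count T f * (log 2 M - log 2 (card X))
      \<le> (\<Sum>k\<in>T. n k) * log 2 ((\<Sum>k\<in>T. n k) / M)"
    by (simp add: count mult_left_mono sum_nonneg n_def)
  also have "\<dots> \<le> (\<Sum>k\<in>T. n k * log 2 (n k))"
    using assms(1,2) unfolding M_def by (rule sum_mult_log_ge) (simp add: n_def)
  also have "\<dots> \<le> (\<Sum>k\<in>T. n k * (\<Sum>j\<in>{1..N}. bin_entropy (bit_freq j (C k))))"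
  proof (intro sum_mono mult_left_mono)
    fix k assume "k \<in> T"
    with C[of k] assms(1,3) show "log 2 (n k) \<le> (\<Sum>j\<in>{1..N}. bin_entropy (bit_freq j (C k)))"
      unfolding n_def by (intro log_card_le_sum_bin_entropy cube_eqI) (auto intro: finite_subset)
  qed (simp add: n_def)
  finally show ?thesis
    by (simp add: M_def n_def C_def)
qed

lemma sum_card_agreeing_le_collision_count:
  fixes T :: "(nat \<Rightarrow> bool) set"
  assumes "finite T" "T \<noteq> {}" "T \<subseteq> cube N" "0 < N" "finite X" "f ` T \<subseteq> X" "q \<in> {1/2..1}"
    and "real N * bin_entropy q \<le> log 2 (card T) - log 2 (card X)"
  shows "(\<Sum>j\<in>{1..N}. \<Sum>k\<in>T. real (card {k' \<in> collision_class T f k. k' j = k j}))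
    \<le> q * real N * collision_count T f"
proof -
  define C where "C = collision_class T f"
  define n where "n k = real (card (C k))" for k
  have C: "finite (C k)" "k \<in> T \<Longrightarrow> 1 \<le> n k" "0 \<le> n k" for k
    using assms(1) by (auto simp: C_def n_def collision_class_def Suc_le_eq card_gt_0_iff)
  have count: "collision_count T f = (\<Sum>k\<in>T. n k)"
    by (simp add: collision_count_def n_def C_def)
  have "0 < real (card T)"
    using assms(1,2) by (simp add: card_gt_0_iff)
  also have "\<dots> \<le> (\<Sum>k\<in>T. n k)"
    using sum_mono[of T "\<lambda>_. 1" n] C(2) by simp
  finally have "0 < (\<Sum>k\<in>T. n k)" .
  have "(\<Sum>j\<in>{1..N}. \<Sum>k\<in>T. real (card {k' \<in> C k. k' j = k j}))
      \<le> (\<Sum>k\<in>T. n k * (\<Sum>j\<in>{1..N}. max (bit_freq j (C k)) (1 - bit_freq j (C k))))"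
    unfolding sum.swap[of _ "{1..N}"] n_def sum_distrib_left
    by (intro sum_mono card_agree_le_max_bit_freq C(1))
  also have "\<dots> \<le> q * real (card {1..N}) * (\<Sum>k\<in>T. n k)"
  proof (rule sum_max_le_if_sum_bin_entropy_ge)
    have "real N * bin_entropy q * collision_count T f
        \<le> (log 2 (card T) - log 2 (card X)) * collision_count T f"
      using \<open>0 < (\<Sum>k\<in>T. n k)\<close> assms(8) by (simp add: count mult_right_mono)
    also have "\<dots> \<le> (\<Sum>k\<in>T. n k * (\<Sum>j\<in>{1..N}. bin_entropy (bit_freq j (C k))))"
      using collision_count_mult_log_le[OF assms(1-3,5,6)] by (simp add: n_def C_def mult.commute)
    finally show "real (card {1..N}) * bin_entropy q * (\<Sum>k\<in>T. n k)
        \<le> (\<Sum>k\<in>T. n k * (\<Sum>j\<in>{1..N}. bin_entropy (bit_freq j (C k))))"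
      by (simp add: count)
  qed (use assms C \<open>0 < (\<Sum>k\<in>T. n k)\<close> bit_freq_bounds[OF C(1)] in auto)
  finally show ?thesis
    by (simp add: C_def count)
qed

section \<open>Probed bits\<close>

definition probed_bits :: "nat \<Rightarrow> (nat \<Rightarrow> nat) \<Rightarrow> (nat \<Rightarrow> bool) \<Rightarrow> (nat \<Rightarrow> bool)" where
  "probed_bits r p k = restrict (\<lambda>i. k (p i)) {1..r}"

lemma probed_bits_in_PiE: "probed_bits r p k \<in> PiE {1..r} (\<lambda>_. UNIV)"
  by (simp add: probed_bits_def)

lemma probed_bits_eq_iff:
  assumes "x \<in> PiE {1..r} (\<lambda>_. UNIV)"
  shows "probed_bits r p k = x \<longleftrightarrow> (\<forall>j\<in>{1..r}. k (p j) = x j)"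
proof
  assume "probed_bits r p k = x"
  then show "\<forall>j\<in>{1..r}. k (p j) = x j"
    by (auto simp: probed_bits_def)
next
  assume "\<forall>j\<in>{1..r}. k (p j) = x j"
  then show "probed_bits r p k = x"
    by (intro PiE_ext[OF probed_bits_in_PiE assms]) (simp add: probed_bits_def)
qed

lemma probed_bits_eq_probed_bits_iff:
  "probed_bits r p k' = probed_bits r p k \<longleftrightarrow> (\<forall>i\<in>{1..r}. k' (p i) = k (p i))"
  by (simp add: probed_bits_eq_iff[OF probed_bits_in_PiE]) (simp add: probed_bits_def)

lemma collision_class_probed_bits_Suc:
  "collision_class T (probed_bits (Suc r) (p(Suc r := j))) k
    = {k' \<in> collision_class T (probed_bits r p) k. k' j = k j}"
proof -
  have "{1..Suc r} = insert (Suc r) {1..r}"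
    by auto
  then show ?thesis
    by (auto simp: collision_class_def probed_bits_eq_probed_bits_iff)
qed

lemma g_fun_eq_collision_count:
  assumes "finite (fiber N Psi lam)"
  shows "g_fun N Psi lam r p
    = collision_count (fiber N Psi lam) (probed_bits r p) / real (card (fiber N Psi lam)) ^ 2"
proof -
  let ?X = "PiE {1..r} (\<lambda>_. UNIV :: bool set)"
  have "collision_count (fiber N Psi lam) (probed_bits r p)
      = (\<Sum>x\<in>?X. real (card {k \<in> fiber N Psi lam. probed_bits r p k = x}) ^ 2)"
    using assms by (intro collision_count_eq_sum_squares image_subsetI probed_bits_in_PiE finite_PiE) auto
  also have "\<dots> = (\<Sum>x\<in>?X. real (card {k \<in> fiber N Psi lam. \<forall>j\<in>{1..r}. k (p j) = x j}) ^ 2)"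
    by (intro sum.cong refl) (simp add: probed_bits_eq_iff)
  finally show ?thesis
    by (simp add: g_fun_def cond_prob_def power_divide sum_divide_distrib)
qed

lemma sum_PiE_insert:
  assumes "x \<notin> S"
  shows "(\<Sum>p\<in>PiE (insert x S) B. F p) = (\<Sum>y\<in>B x. \<Sum>p\<in>PiE S B. F (p(x := y)))"
  unfolding PiE_insert_eq sum.reindex[OF inj_combinator[OF assms]]
  by (simp add: sum.cartesian_product case_prod_beta)

lemma sum_collision_count_Suc_le:
  fixes T :: "(nat \<Rightarrow> bool) set"
  assumes "finite T" "T \<noteq> {}" "T \<subseteq> cube N" "0 < N" "q \<in> {1/2..1}"
    and "real N * bin_entropy q \<le> log 2 (card T) - r"
  shows "(\<Sum>p\<in>PiE {1..Suc r} (\<lambda>_. {1..N}). collision_count T (probed_bits (Suc r) p))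
    \<le> q * N * (\<Sum>p\<in>PiE {1..r} (\<lambda>_. {1..N}). collision_count T (probed_bits r p))"
proof -
  let ?X = "PiE {1..r} (\<lambda>_. UNIV :: bool set)"
  have X: "finite ?X" "log 2 (card ?X) = r"
    by (simp_all add: finite_PiE card_PiE log_nat_power)
  have "{1..Suc r} = insert (Suc r) {1..r}"
    by auto
  then have "(\<Sum>p\<in>PiE {1..Suc r} (\<lambda>_. {1..N}). collision_count T (probed_bits (Suc r) p))
      = (\<Sum>p\<in>PiE {1..r} (\<lambda>_. {1..N}). \<Sum>j\<in>{1..N}. \<Sum>k\<in>T.
           real (card {k' \<in> collision_class T (probed_bits r p) k. k' j = k j}))"
    by (simp add: sum_PiE_insert collision_count_def collision_class_probed_bits_Suc) (rule sum.swap)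
  also have "\<dots> \<le> (\<Sum>p\<in>PiE {1..r} (\<lambda>_. {1..N}). q * N * collision_count T (probed_bits r p))"
  proof (rule sum_mono)
    fix p
    have "probed_bits r p ` T \<subseteq> ?X"
      by (rule image_subsetI, rule probed_bits_in_PiE)
    with assms X show "(\<Sum>j\<in>{1..N}. \<Sum>k\<in>T.
        real (card {k' \<in> collision_class T (probed_bits r p) k. k' j = k j}))
      \<le> q * N * collision_count T (probed_bits r p)"
      by (intro sum_card_agreeing_le_collision_count) auto
  qed
  finally show ?thesis
    by (simp add: sum_distrib_left)
qed

lemma sum_collision_count_le:
  fixes T :: "(nat \<Rightarrow> bool) set"
  assumes "finite T" "T \<noteq> {}" "T \<subseteq> cube N" "0 < N" "q \<in> {1/2..1}"
    and "real N * bin_entropy q + d \<le> log 2 (card T)"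
  shows "(\<Sum>p\<in>PiE {1..d} (\<lambda>_. {1..N}). collision_count T (probed_bits d p))
    \<le> (q * N) ^ d * real (card T) ^ 2"
proof -
  have "(\<Sum>p\<in>PiE {1..r} (\<lambda>_. {1..N}). collision_count T (probed_bits r p))
      \<le> (q * N) ^ r * real (card T) ^ 2" if "r \<le> d" for r
    using that
  proof (induction r)
    case 0
    then show ?case
      by (simp add: collision_count_def collision_class_def probed_bits_def power2_eq_square)
  next
    case (Suc r)
    have "(\<Sum>p\<in>PiE {1..Suc r} (\<lambda>_. {1..N}). collision_count T (probed_bits (Suc r) p))
        \<le> q * N * (\<Sum>p\<in>PiE {1..r} (\<lambda>_. {1..N}). collision_count T (probed_bits r p))"
      using assms Suc.prems by (intro sum_collision_count_Suc_le) auto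
    also have "\<dots> \<le> q * N * ((q * N) ^ r * real (card T) ^ 2)"
      using assms(5) Suc by (intro mult_left_mono) auto
    finally show ?case
      by (simp add: mult_ac)
  qed
  then show ?thesis
    by simp
qed

lemma expected_g_eq_sum_collision_count:
  assumes "finite (fiber N Psi lam)"
  shows "expected_g N Psi lam d
    = (\<Sum>p\<in>PiE {1..d} (\<lambda>_. {1..N}). collision_count (fiber N Psi lam) (probed_bits d p))
      / (real (card (fiber N Psi lam)) ^ 2 * real N ^ d)"
  using assms by (simp add: expected_g_def g_fun_eq_collision_count sum_divide_distrib)

theorem lemma5:
  fixes N d :: nat and \<alpha> :: real and Psi :: "(nat \<Rightarrow> bool) \<Rightarrow> 'l" and L :: "'l set" and lam :: 'l
  assumes "finite L"
    and "Psi ` cube N \<subseteq> L"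
    and "lam \<in> L"
    and "fiber N Psi lam \<noteq> {}"
    and "1 \<le> d"
    and "\<alpha> \<ge> 0"
    and "\<alpha> + real d \<le> real N"
    and "log 2 (real (card (fiber N Psi lam))) \<ge> real N - \<alpha>"
  shows "expected_g N Psi lam d \<le> (bin_entropy_inv (1 - (\<alpha> + real d) / real N)) ^ d"
proof -
  define T where "T = fiber N Psi lam"
  define y where "y = 1 - (\<alpha> + real d) / real N"
  define q where "q = bin_entropy_inv y"
  have T: "finite T" "T \<noteq> {}" "T \<subseteq> cube N"
    using assms(4) finite_subset[of T "cube N"] by (auto simp: T_def fiber_def cube_def finite_PiE)
  have N: "0 < real N"
    using assms(5-7) by simp
  then have "0 \<le> y" "y \<le> 1"
    using assms(5-7) by (simp_all add: y_def field_simps)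
  then have q: "q \<in> {1/2..1}" "real N * bin_entropy q = real N - \<alpha> - real d"
    using N bin_entropy_inv_spec[of y] by (simp_all add: q_def y_def field_simps)
  have "expected_g N Psi lam d
      = (\<Sum>p\<in>PiE {1..d} (\<lambda>_. {1..N}). collision_count T (probed_bits d p))
        / (real (card T) ^ 2 * real N ^ d)"
    using T by (simp add: T_def expected_g_eq_sum_collision_count)
  also have "\<dots> \<le> (q * N) ^ d * real (card T) ^ 2 / (real (card T) ^ 2 * real N ^ d)"
    using T N q assms(8)
    by (intro divide_right_mono sum_collision_count_le) (auto simp: T_def)
  also have "\<dots> = q ^ d"
    using T N by (simp add: power_mult_distrib card_gt_0_iff)
  finally show ?thesis
    by (simp add: q_def y_def)
qed

end
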